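(* Let $G$ be a finite connected graph with a fixed normal orientation $\varepsilon$ and a fixed total order on $E(G)$, and let $e=uv$ be the largest edge of $G$, assumed not to be a loop. Let $\varepsilon_1\neq\varepsilon_2$ be two reduced totally cyclic orientations of $G$ such that $e$ is cycle flippable neither with respect to $\varepsilon_1$ nor with respect to $\varepsilon_2$. Let $\varepsilon_1',\varepsilon_2'$ be the orientations of the contracted graph $G/e$ induced by $\varepsilon_1,\varepsilon_2$. Then $\varepsilon_1'$ and $\varepsilon_2'$ are not Eulerian equivalent.
   Context: An orientation assigns a direction to each edge; it is totally cyclic if every edge lies on a directed cycle. Two orientations $\varepsilon_1,\varepsilon_2$ of a graph are Eulerian equivalent if the spanning subgraph formed by the edges on which they differ, oriented by $\varepsilon_1$, has in-degree equal to out-degree at every vertex. Given the normal orientation $\varepsilon$ and the total order, an orientation $\varepsilon'$ is reduced if for every edge $f$, either $\varepsilon'(f)=\varepsilon(f)$, or there is no cycle that is directed with respect to $\varepsilon'$, contains $f$, and has all its other edges smaller than $f$. An edge $e$ with endpoints $u,v$ is cycle flippable with respect to an orientation if in $G-e$ (with the induced orientation) there are directed paths both from $u$ to $v$ and from $v$ to $u$. *)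

theory Defs
  imports Main
begin

(* A finite multigraph (loops and parallel edges allowed) is given by a vertex set V,
   an edge set E and two maps s t :: 'e => 'v.  The pair (s f, t f) encodes the fixed
   normal (reference) orientation epsilon: under epsilon, f goes from s f to t f.
   An orientation is a map ori :: 'e => bool; ori f = True means f is oriented as in
   epsilon, ori f = False means it is reversed.  The total order on E(G) is the
   linorder of the edge type. *)

definition otail :: "('e \<Rightarrow> 'v) \<Rightarrow> ('e \<Rightarrow> 'v) \<Rightarrow> ('e \<Rightarrow> bool) \<Rightarrow> 'e \<Rightarrow> 'v" where
  "otail s t ori f = (if ori f then s f else t f)"

definition ohead :: "('e \<Rightarrow> 'v) \<Rightarrow> ('e \<Rightarrow> 'v) \<Rightarrow> ('e \<Rightarrow> bool) \<Rightarrow> 'e \<Rightarrow> 'v" where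
  "ohead s t ori f = (if ori f then t f else s f)"

definition graph :: "'v set \<Rightarrow> 'e set \<Rightarrow> ('e \<Rightarrow> 'v) \<Rightarrow> ('e \<Rightarrow> 'v) \<Rightarrow> bool" where
  "graph V E s t \<longleftrightarrow> finite V \<and> finite E \<and> (\<forall>f\<in>E. s f \<in> V \<and> t f \<in> V)"

definition connected_graph :: "'v set \<Rightarrow> 'e set \<Rightarrow> ('e \<Rightarrow> 'v) \<Rightarrow> ('e \<Rightarrow> 'v) \<Rightarrow> bool" where
  "connected_graph V E s t \<longleftrightarrow>
     (\<forall>x\<in>V. \<forall>y\<in>V. (x, y) \<in> (\<Union>f\<in>E. {(s f, t f), (t f, s f)})\<^sup>*)"

definition dir_cycle :: "'e set \<Rightarrow> ('e \<Rightarrow> 'v) \<Rightarrow> ('e \<Rightarrow> 'v) \<Rightarrow> ('e \<Rightarrow> bool) \<Rightarrow> 'e list \<Rightarrow> bool" where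
  "dir_cycle E s t ori C \<longleftrightarrow> C \<noteq> [] \<and> distinct C \<and> set C \<subseteq> E \<and>
     (\<forall>i<length C. ohead s t ori (C ! i) = otail s t ori (C ! ((i + 1) mod length C))) \<and>
     distinct (map (otail s t ori) C)"

definition totally_cyclic :: "'e set \<Rightarrow> ('e \<Rightarrow> 'v) \<Rightarrow> ('e \<Rightarrow> 'v) \<Rightarrow> ('e \<Rightarrow> bool) \<Rightarrow> bool" where
  "totally_cyclic E s t ori \<longleftrightarrow> (\<forall>f\<in>E. \<exists>C. dir_cycle E s t ori C \<and> f \<in> set C)"

definition reduced :: "'e::linorder set \<Rightarrow> ('e \<Rightarrow> 'v) \<Rightarrow> ('e \<Rightarrow> 'v) \<Rightarrow> ('e \<Rightarrow> bool) \<Rightarrow> bool" where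
  "reduced E s t ori \<longleftrightarrow> (\<forall>f\<in>E. ori f \<or>
     \<not> (\<exists>C. dir_cycle E s t ori C \<and> f \<in> set C \<and> (\<forall>g\<in>set C. g \<noteq> f \<longrightarrow> g < f)))"

definition eulerian_equiv :: "'v set \<Rightarrow> 'e set \<Rightarrow> ('e \<Rightarrow> 'v) \<Rightarrow> ('e \<Rightarrow> 'v) \<Rightarrow> ('e \<Rightarrow> bool) \<Rightarrow> ('e \<Rightarrow> bool) \<Rightarrow> bool" where
  "eulerian_equiv V E s t o1 o2 \<longleftrightarrow>
     (let D = {f\<in>E. o1 f \<noteq> o2 f} in
      \<forall>v\<in>V. card {f\<in>D. ohead s t o1 f = v} = card {f\<in>D. otail s t o1 f = v})"

definition arcs :: "'e set \<Rightarrow> ('e \<Rightarrow> 'v) \<Rightarrow> ('e \<Rightarrow> 'v) \<Rightarrow> ('e \<Rightarrow> bool) \<Rightarrow> ('v \<times> 'v) set" where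
  "arcs E s t ori = {(otail s t ori f, ohead s t ori f) | f. f \<in> E}"

definition cycle_flippable :: "'e set \<Rightarrow> ('e \<Rightarrow> 'v) \<Rightarrow> ('e \<Rightarrow> 'v) \<Rightarrow> ('e \<Rightarrow> bool) \<Rightarrow> 'e \<Rightarrow> bool" where
  "cycle_flippable E s t ori e \<longleftrightarrow>
     (s e, t e) \<in> (arcs (E - {e}) s t ori)\<^sup>* \<and> (t e, s e) \<in> (arcs (E - {e}) s t ori)\<^sup>*"

(* contraction G/e: the endpoint t e is identified with s e; edges E - {e}
   keep their (induced) endpoints and orientation values *)
definition cmerge :: "('e \<Rightarrow> 'v) \<Rightarrow> ('e \<Rightarrow> 'v) \<Rightarrow> 'e \<Rightarrow> 'v \<Rightarrow> 'v" where
  "cmerge s t e v = (if v = t e then s e else v)"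

end

theory Submission
  imports Defs
begin

(* Let D be the set of edges of G - e on which o1 and o2 differ; D is
   nonempty because the largest edge e is positive (not reversed) in every reduced
   totally cyclic orientation.  Let f be the largest edge of D; by symmetry of
   Eulerian equivalence we may assume f is reversed in o1 =: p, with o2 =: q.
   If p and q were Eulerian equivalent on G/e, then D oriented by p is balanced in
   G/e, so the arc f closes to a directed walk inside D in G/e.  Lifted to G this is
   a walk from head f to tail f in D that may jump between the endpoints of e.
   Without jumps it closes to a directed cycle through f with all other edges below
   f, contradicting that p is reduced.  With jumps it yields a directed path between
   the endpoints of e avoiding e, in p or (reversing D) in q, which together with the
   directed cycle through e makes e cycle flippable. *)

section \<open>Directed walks\<close>

fun walk :: "('e \<Rightarrow> 'v) \<Rightarrow> ('e \<Rightarrow> 'v) \<Rightarrow> ('e \<Rightarrow> bool) \<Rightarrow> 'v \<Rightarrow> 'e list \<Rightarrow> 'v \<Rightarrow> bool" where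
  "walk s t p x [] y = (x = y)"
| "walk s t p x (g # L) y = (otail s t p g = x \<and> walk s t p (ohead s t p g) L y)"

lemma walk_append:
  "walk s t p x (A @ B) y \<longleftrightarrow> (\<exists>z. walk s t p x A z \<and> walk s t p z B y)"
  by (induction A arbitrary: x) auto

lemma arcs_mono: "A \<subseteq> B \<Longrightarrow> arcs A s t p \<subseteq> arcs B s t p"
  unfolding arcs_def by auto

lemma reach_mono: "A \<subseteq> B \<Longrightarrow> (arcs A s t p)\<^sup>* \<subseteq> (arcs B s t p)\<^sup>*"
  by (intro rtrancl_mono arcs_mono)

lemma arcs_reverse:
  assumes "\<forall>g\<in>A. p g \<noteq> q g"
  shows "arcs A s t p = (arcs A s t q)\<inverse>"
proof -
  have "otail s t p g = ohead s t q g \<and> ohead s t p g = otail s t q g" if "g \<in> A" for g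
    using assms that unfolding otail_def ohead_def by auto
  then show ?thesis unfolding arcs_def by force
qed

lemma walk_imp_reach: "walk s t p x L y \<Longrightarrow> (x, y) \<in> (arcs (set L) s t p)\<^sup>*"
proof (induction L arbitrary: x)
  case Nil
  then show ?case by simp
next
  case (Cons g L)
  then have first: "(x, ohead s t p g) \<in> arcs (set (g # L)) s t p"
    unfolding arcs_def by auto
  have "(ohead s t p g, y) \<in> (arcs (set L) s t p)\<^sup>*" using Cons by auto
  also have "\<dots> \<subseteq> (arcs (set (g # L)) s t p)\<^sup>*" by (rule reach_mono) auto
  finally show ?case using first by (meson converse_rtrancl_into_rtrancl)
qed

lemma reach_imp_walk:
  "(x, y) \<in> (arcs A s t p)\<^sup>* \<Longrightarrow> \<exists>L. set L \<subseteq> A \<and> walk s t p x L y"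
proof (induction rule: rtrancl_induct)
  case base
  then show ?case by (intro exI[of _ "[]"]) auto
next
  case (step y z)
  then obtain L where L: "set L \<subseteq> A" "walk s t p x L y" by auto
  from step(2) obtain g where "g \<in> A" "y = otail s t p g" "z = ohead s t p g"
    unfolding arcs_def by auto
  then show ?case using L by (intro exI[of _ "L @ [g]"]) (auto simp: walk_append)
qed

lemma walk_shorten:
  "walk s t p x L y \<Longrightarrow> \<exists>L'. walk s t p x L' y \<and> set L' \<subseteq> set L \<and>
     distinct (map (otail s t p) L') \<and> y \<notin> otail s t p ` set L'"
proof (induction L arbitrary: x)
  case Nil
  then show ?case by (intro exI[of _ "[]"]) auto
next
  case (Cons g L)
  then have tail_g: "otail s t p g = x" and rest: "walk s t p (ohead s t p g) L y" by auto
  from Cons.IH[OF rest] obtain L1 where L1: "walk s t p (ohead s t p g) L1 y"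
    "set L1 \<subseteq> set L" "distinct (map (otail s t p) L1)" "y \<notin> otail s t p ` set L1"
    by blast
  consider "x = y" | "x \<noteq> y" "x \<in> otail s t p ` set L1" | "x \<noteq> y" "x \<notin> otail s t p ` set L1"
    by blast
  then show ?case
  proof cases
    case 1
    then show ?thesis by (intro exI[of _ "[]"]) auto
  next
    case 2
    (* cut the loop: restart at the edge of L1 leaving x *)
    then obtain h where h: "h \<in> set L1" "otail s t p h = x" by auto
    then obtain A B where L1_split: "L1 = A @ h # B" by (meson split_list)
    with L1(1) obtain z where "walk s t p z (h # B) y" by (auto simp: walk_append)
    then have "walk s t p x (h # B) y" using h by auto
    then show ?thesis using L1 L1_split by (intro exI[of _ "h # B"]) auto
  next
    case 3
    then show ?thesis using L1 tail_g by (intro exI[of _ "g # L1"]) auto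
  qed
qed

lemma walk_nth:
  "walk s t p x L y \<Longrightarrow> i < length L \<Longrightarrow>
     ohead s t p (L ! i) = (if Suc i < length L then otail s t p (L ! Suc i) else y)"
proof (induction L arbitrary: x i)
  case Nil
  then show ?case by simp
next
  case (Cons g L)
  then show ?case by (cases i; cases L) auto
qed

lemma walk_of_consecutive:
  "(\<forall>i. Suc i < length L \<longrightarrow> ohead s t p (L ! i) = otail s t p (L ! Suc i)) \<Longrightarrow> L \<noteq> [] \<Longrightarrow>
     walk s t p (otail s t p (L ! 0)) L (ohead s t p (last L))"
proof (induction L)
  case Nil
  then show ?case by simp
next
  case (Cons g L)
  show ?case
  proof (cases "L = []")
    case True
    then show ?thesis by simp
  next
    case False
    have link: "ohead s t p g = otail s t p (L ! 0)"
      using Cons.prems(1)[rule_format, of 0] False by simp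
    have "\<forall>i. Suc i < length L \<longrightarrow> ohead s t p (L ! i) = otail s t p (L ! Suc i)"
      using Cons.prems(1) by (metis Suc_less_eq length_Cons nth_Cons_Suc)
    then have "walk s t p (otail s t p (L ! 0)) L (ohead s t p (last L))"
      using Cons.IH False by blast
    then show ?thesis using link False by simp
  qed
qed

section \<open>Directed cycles\<close>

lemma walk_closes_to_cycle:
  assumes "f \<in> A" "A \<subseteq> E" "walk s t p (ohead s t p f) L (otail s t p f)" "set L \<subseteq> A"
  shows "\<exists>C. dir_cycle E s t p C \<and> f \<in> set C \<and> set C \<subseteq> A"
proof -
  obtain L' where L': "walk s t p (ohead s t p f) L' (otail s t p f)" "set L' \<subseteq> set L"
    "distinct (map (otail s t p) L')" "otail s t p f \<notin> otail s t p ` set L'"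
    using walk_shorten[OF assms(3)] by blast
  define C where "C = f # L'"
  have closed: "walk s t p (otail s t p f) C (otail s t p f)" using L' C_def by simp
  have tails: "distinct (map (otail s t p) C)" using L' C_def by auto
  have "dir_cycle E s t p C" unfolding dir_cycle_def
  proof (intro conjI allI impI)
    show "C \<noteq> []" using C_def by simp
    show "distinct C" using tails distinct_map by blast
    show "set C \<subseteq> E" using C_def L' assms by auto
    show "distinct (map (otail s t p) C)" by (fact tails)
  next
    fix i assume i: "i < length C"
    have "(i + 1) mod length C = (if Suc i < length C then Suc i else 0)"
    proof (cases "Suc i < length C")
      case False
      then have "Suc i = length C" using i by simp
      then show ?thesis by simp
    qed simp
    then show "ohead s t p (C ! i) = otail s t p (C ! ((i + 1) mod length C))"
      using walk_nth[OF closed i] C_def by auto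
  qed
  moreover have "f \<in> set C" "set C \<subseteq> A" using C_def L' assms by auto
  ultimately show ?thesis by blast
qed

lemma dir_cycle_walk:
  assumes "dir_cycle E s t p C"
  shows "walk s t p (otail s t p (C ! 0)) C (otail s t p (C ! 0))"
proof -
  have ne: "C \<noteq> []"
    and succ: "\<forall>i<length C. ohead s t p (C ! i) = otail s t p (C ! ((i + 1) mod length C))"
    using assms unfolding dir_cycle_def by auto
  have "ohead s t p (C ! (length C - 1)) = otail s t p (C ! 0)"
    using succ[rule_format, of "length C - 1"] ne by simp
  then have "ohead s t p (last C) = otail s t p (C ! 0)" using ne by (simp add: last_conv_nth)
  moreover have "\<forall>i. Suc i < length C \<longrightarrow> ohead s t p (C ! i) = otail s t p (C ! Suc i)"
    using succ by auto
  ultimately show ?thesis using walk_of_consecutive ne by metis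
qed

lemma dir_cycle_detour:
  assumes "dir_cycle E s t p C" "g \<in> set C"
  shows "(ohead s t p g, otail s t p g) \<in> (arcs (set C - {g}) s t p)\<^sup>*"
proof -
  have "distinct C" using assms unfolding dir_cycle_def by auto
  obtain A B where C_split: "C = A @ g # B" using assms(2) by (meson split_list)
  with dir_cycle_walk[OF assms(1)] obtain z where
    "walk s t p (otail s t p (C ! 0)) A z" "walk s t p z (g # B) (otail s t p (C ! 0))"
    by (auto simp: walk_append)
  then have "walk s t p (ohead s t p g) (B @ A) (otail s t p g)" by (auto simp: walk_append)
  then have "(ohead s t p g, otail s t p g) \<in> (arcs (set (B @ A)) s t p)\<^sup>*"
    by (rule walk_imp_reach)
  also have "\<dots> \<subseteq> (arcs (set C - {g}) s t p)\<^sup>*"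
    by (rule reach_mono) (use \<open>distinct C\<close> C_split in auto)
  finally show ?thesis .
qed

section \<open>Reduced and totally cyclic orientations\<close>

lemma reduced_no_return:
  assumes "reduced E s t p" "A \<subseteq> E" "f \<in> A" "\<forall>g\<in>A. g \<le> f" "\<not> p f"
  shows "(ohead s t p f, otail s t p f) \<notin> (arcs A s t p)\<^sup>*"
proof
  assume "(ohead s t p f, otail s t p f) \<in> (arcs A s t p)\<^sup>*"
  then obtain L where "set L \<subseteq> A" "walk s t p (ohead s t p f) L (otail s t p f)"
    by (blast dest: reach_imp_walk)
  then obtain C where C: "dir_cycle E s t p C" "f \<in> set C" "set C \<subseteq> A"
    using walk_closes_to_cycle[OF assms(3,2)] by blast
  then have "\<forall>g\<in>set C. g \<noteq> f \<longrightarrow> g < f" using assms(4) by force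
  moreover have "f \<in> E" using assms(2,3) by blast
  ultimately show False using assms(1,5) C unfolding reduced_def by blast
qed

(* the largest edge lies on a cycle of smaller edges, so it is never reversed *)
lemma largest_edge_positive:
  assumes "e \<in> E" "\<forall>f\<in>E. f \<le> e" "totally_cyclic E s t p" "reduced E s t p"
  shows "p e"
proof -
  obtain C where C: "dir_cycle E s t p C" "e \<in> set C"
    using assms unfolding totally_cyclic_def by blast
  then have "\<forall>g\<in>set C. g \<noteq> e \<longrightarrow> g < e" using assms(2) unfolding dir_cycle_def by force
  then show ?thesis using assms(1,4) C unfolding reduced_def by blast
qed

lemma not_flippable_no_forward_path:
  assumes "totally_cyclic E s t p" "e \<in> E" "p e" "\<not> cycle_flippable E s t p e"
  shows "(s e, t e) \<notin> (arcs (E - {e}) s t p)\<^sup>*"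
proof -
  obtain C where C: "dir_cycle E s t p C" "e \<in> set C"
    using assms(1,2) unfolding totally_cyclic_def by blast
  have "(ohead s t p e, otail s t p e) \<in> (arcs (set C - {e}) s t p)\<^sup>*"
    by (rule dir_cycle_detour[OF C])
  also have "\<dots> \<subseteq> (arcs (E - {e}) s t p)\<^sup>*"
    by (rule reach_mono) (use C(1) in \<open>unfold dir_cycle_def, blast\<close>)
  finally have "(t e, s e) \<in> (arcs (E - {e}) s t p)\<^sup>*"
    using assms(3) by (simp add: otail_def ohead_def)
  then show ?thesis using assms(4) unfolding cycle_flippable_def by blast
qed

section \<open>Balanced edge sets\<close>

(* in a finite balanced edge set (in-degree = out-degree everywhere), every arc f lies
   on a closed walk: the set of vertices reachable from head f would otherwise have
   strictly more entering than leaving arcs *)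
lemma balanced_arc_on_closed_walk:
  assumes "finite D" "f \<in> D" "finite W" "\<forall>g\<in>D. hd' g \<in> W \<and> tl' g \<in> W"
    and balanced: "\<forall>w\<in>W. card {g\<in>D. hd' g = w} = card {g\<in>D. tl' g = w}"
  shows "(hd' f, tl' f) \<in> {(tl' g, hd' g) | g. g \<in> D}\<^sup>*"
proof (rule ccontr)
  let ?A = "{(tl' g, hd' g) | g. g \<in> D}"
  assume unreached: "(hd' f, tl' f) \<notin> ?A\<^sup>*"
  define R where "R = {w\<in>W. (hd' f, w) \<in> ?A\<^sup>*}"
  have card_into_R: "card {g\<in>D. k g \<in> R} = (\<Sum>w\<in>R. card {g\<in>D. k g = w})" for k :: "_ \<Rightarrow> _"
  proof -
    have "{g\<in>D. k g \<in> R} = (\<Union>w\<in>R. {g\<in>D. k g = w})" by auto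
    moreover have "card (\<Union>w\<in>R. {g\<in>D. k g = w}) = (\<Sum>w\<in>R. card {g\<in>D. k g = w})"
      by (rule card_UN_disjoint) (use assms(1,3) R_def in auto)
    ultimately show ?thesis by simp
  qed
  have same_card: "card {g\<in>D. hd' g \<in> R} = card {g\<in>D. tl' g \<in> R}"
    unfolding card_into_R using balanced R_def by (intro sum.cong) auto
  (* R is closed under arcs, so every arc leaving R also enters R *)
  have "{g\<in>D. tl' g \<in> R} \<subseteq> {g\<in>D. hd' g \<in> R}"
    using assms(4) by (auto simp: R_def intro: rtrancl_into_rtrancl)
  moreover have "f \<in> {g\<in>D. hd' g \<in> R}" "f \<notin> {g\<in>D. tl' g \<in> R}"
    using assms(2,4) unreached R_def by auto
  ultimately have "card {g\<in>D. tl' g \<in> R} < card {g\<in>D. hd' g \<in> R}"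
    using assms(1) by (intro psubset_card_mono) auto
  then show False using same_card by simp
qed

lemma eulerian_equiv_sym:
  assumes "eulerian_equiv V E s t o1 o2"
  shows "eulerian_equiv V E s t o2 o1"
proof -
  have "ohead s t o2 f = otail s t o1 f" "otail s t o2 f = ohead s t o1 f" if "o1 f \<noteq> o2 f" for f
    using that unfolding otail_def ohead_def by auto
  then have "{f\<in>{f\<in>E. o2 f \<noteq> o1 f}. ohead s t o2 f = v} = {f\<in>{f\<in>E. o1 f \<noteq> o2 f}. otail s t o1 f = v}"
    "{f\<in>{f\<in>E. o2 f \<noteq> o1 f}. otail s t o2 f = v} = {f\<in>{f\<in>E. o1 f \<noteq> o2 f}. ohead s t o1 f = v}"
    for v by auto
  then show ?thesis using assms unfolding eulerian_equiv_def Let_def by simp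
qed

section \<open>Walks in the contracted graph\<close>

lemma otail_cmerge: "otail (cmerge s t e \<circ> s) (cmerge s t e \<circ> t) p g = cmerge s t e (otail s t p g)"
  and ohead_cmerge: "ohead (cmerge s t e \<circ> s) (cmerge s t e \<circ> t) p g = cmerge s t e (ohead s t p g)"
  by (simp_all add: otail_def ohead_def)

lemma contracted_reach_lift:
  assumes "(x', y') \<in> (arcs A (cmerge s t e \<circ> s) (cmerge s t e \<circ> t) p)\<^sup>*" "cmerge s t e x = x'"
  shows "\<exists>y. cmerge s t e y = y' \<and> (x, y) \<in> (arcs A s t p \<union> {(s e, t e), (t e, s e)})\<^sup>*"
  using assms
proof (induction rule: rtrancl_induct)
  case base
  then show ?case by auto
next
  case (step y' z')
  let ?R = "arcs A s t p \<union> {(s e, t e), (t e, s e)}"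
  from step(2) obtain g where g: "g \<in> A" "y' = cmerge s t e (otail s t p g)"
      "z' = cmerge s t e (ohead s t p g)"
    unfolding arcs_def otail_cmerge ohead_cmerge by auto
  from step obtain y where y: "cmerge s t e y = y'" "(x, y) \<in> ?R\<^sup>*" by auto
  have "(y, otail s t p g) \<in> ?R\<^sup>="
    using y(1) g(2) by (auto simp: cmerge_def split: if_splits)
  with y(2) have "(x, otail s t p g) \<in> ?R\<^sup>*" by (auto intro: rtrancl_into_rtrancl)
  moreover have "(otail s t p g, ohead s t p g) \<in> ?R" using g unfolding arcs_def by auto
  ultimately have "(x, ohead s t p g) \<in> ?R\<^sup>*" by (rule rtrancl_into_rtrancl)
  then show ?case using g by blast
qed

lemma reach_with_jump_cases:
  assumes "(x, y) \<in> (A \<union> {(u, v), (v, u)})\<^sup>*"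
  shows "(x, y) \<in> A\<^sup>* \<or> ((x, u) \<in> A\<^sup>* \<and> (v, y) \<in> A\<^sup>*) \<or> ((x, v) \<in> A\<^sup>* \<and> (u, y) \<in> A\<^sup>*)"
  using assms
proof (induction rule: rtrancl_induct)
  case base
  then show ?case by simp
next
  case (step y z)
  then show ?case by (auto intro: rtrancl_into_rtrancl)
qed

lemma contracted_balanced_return:
  assumes "graph V E s t" "D \<subseteq> E" "f \<in> D"
    and balanced: "\<forall>w\<in>cmerge s t e ` V.
      card {g\<in>D. ohead (cmerge s t e \<circ> s) (cmerge s t e \<circ> t) p g = w}
      = card {g\<in>D. otail (cmerge s t e \<circ> s) (cmerge s t e \<circ> t) p g = w}"
  shows "(ohead s t p f, otail s t p f) \<in> (arcs D s t p \<union> {(s e, t e), (t e, s e)})\<^sup>*"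
proof -
  let ?cm = "cmerge s t e"
  have "finite D" "finite V" and ends: "\<forall>g\<in>D. s g \<in> V \<and> t g \<in> V"
    using assms(1,2) finite_subset unfolding graph_def by blast+
  moreover have "\<forall>g\<in>D. ohead (?cm \<circ> s) (?cm \<circ> t) p g \<in> ?cm ` V
      \<and> otail (?cm \<circ> s) (?cm \<circ> t) p g \<in> ?cm ` V"
    using ends by (simp add: otail_def ohead_def)
  ultimately have "(ohead (?cm \<circ> s) (?cm \<circ> t) p f, otail (?cm \<circ> s) (?cm \<circ> t) p f)
      \<in> {(otail (?cm \<circ> s) (?cm \<circ> t) p g, ohead (?cm \<circ> s) (?cm \<circ> t) p g) | g. g \<in> D}\<^sup>*"
    using balanced_arc_on_closed_walk[OF _ assms(3) _ _ balanced] by blast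
  then have "(?cm (ohead s t p f), ?cm (otail s t p f)) \<in> (arcs D (?cm \<circ> s) (?cm \<circ> t) p)\<^sup>*"
    unfolding arcs_def otail_cmerge ohead_cmerge .
  from contracted_reach_lift[OF this refl] obtain y where
    y: "?cm y = ?cm (otail s t p f)" "(ohead s t p f, y) \<in> (arcs D s t p \<union> {(s e, t e), (t e, s e)})\<^sup>*"
    by blast
  have "(y, otail s t p f) \<in> (arcs D s t p \<union> {(s e, t e), (t e, s e)})\<^sup>="
    using y(1) by (auto simp: cmerge_def split: if_splits)
  then show ?thesis using y(2) by (auto intro: rtrancl_into_rtrancl)
qed

lemma reversed_largest_difference_impossible:
  assumes graph: "graph V E s t" and "e \<in> E" "\<forall>g\<in>E. g \<le> e"
    and "totally_cyclic E s t p" "reduced E s t p" "totally_cyclic E s t q" "reduced E s t q"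
    and nfp: "\<not> cycle_flippable E s t p e" and nfq: "\<not> cycle_flippable E s t q e"
    and D_def: "D = {g \<in> E - {e}. p g \<noteq> q g}" and "f \<in> D" "\<forall>g\<in>D. g \<le> f" "\<not> p f"
    and equiv: "eulerian_equiv (cmerge s t e ` V) (E - {e}) (cmerge s t e \<circ> s) (cmerge s t e \<circ> t) p q"
  shows False
proof -
  let ?A = "arcs D s t p"
  let ?a = "otail s t p f" and ?b = "ohead s t p f"
  have pe: "p e" and qe: "q e" using largest_edge_positive assms(2-7) by blast+
  have DE: "D \<subseteq> E - {e}" using D_def by auto
  have "\<forall>w\<in>cmerge s t e ` V.
      card {g\<in>D. ohead (cmerge s t e \<circ> s) (cmerge s t e \<circ> t) p g = w}
      = card {g\<in>D. otail (cmerge s t e \<circ> s) (cmerge s t e \<circ> t) p g = w}"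
    using equiv unfolding eulerian_equiv_def D_def Let_def by blast
  then have "(?b, ?a) \<in> (?A \<union> {(s e, t e), (t e, s e)})\<^sup>*"
    using contracted_balanced_return[OF graph _ \<open>f \<in> D\<close>] DE by blast
  then consider "(?b, ?a) \<in> ?A\<^sup>*" | "(?b, s e) \<in> ?A\<^sup>*" "(t e, ?a) \<in> ?A\<^sup>*"
    | "(?b, t e) \<in> ?A\<^sup>*" "(s e, ?a) \<in> ?A\<^sup>*"
    by (blast dest: reach_with_jump_cases)
  then show False
  proof cases
    case 1
    moreover have "D \<subseteq> E" using DE by blast
    ultimately show False using reduced_no_return[OF assms(5) _ \<open>f \<in> D\<close> assms(12,13)] by blast
  next
    (* t e \<rightarrow> a \<rightarrow> b \<rightarrow> s e under p through D, i.e. s e \<rightarrow> t e under q *)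
    case 2
    have "(?a, ?b) \<in> ?A" using \<open>f \<in> D\<close> unfolding arcs_def by auto
    with 2 have "(t e, s e) \<in> ?A\<^sup>*" by (meson rtrancl_into_rtrancl rtrancl_trans)
    moreover have "?A = (arcs D s t q)\<inverse>" using D_def by (intro arcs_reverse) blast
    ultimately have "(s e, t e) \<in> (arcs D s t q)\<^sup>*" by (simp add: rtrancl_converse)
    then have "(s e, t e) \<in> (arcs (E - {e}) s t q)\<^sup>*" using reach_mono[OF DE] by blast
    then show False using not_flippable_no_forward_path[OF assms(6,2) qe nfq] by blast
  next
    (* s e \<rightarrow> a \<rightarrow> b \<rightarrow> t e under p through D *)
    case 3
    have "(?a, ?b) \<in> ?A" using \<open>f \<in> D\<close> unfolding arcs_def by auto
    with 3 have "(s e, t e) \<in> ?A\<^sup>*" by (meson rtrancl_into_rtrancl rtrancl_trans)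
    then have "(s e, t e) \<in> (arcs (E - {e}) s t p)\<^sup>*" using reach_mono[OF DE] by blast
    then show False using not_flippable_no_forward_path[OF assms(4,2) pe nfp] by blast
  qed
qed

theorem lemma4:
  fixes V :: "'v set" and E :: "'e::linorder set" and s t :: "'e \<Rightarrow> 'v"
    and e :: 'e and o1 o2 :: "'e \<Rightarrow> bool"
  assumes "graph V E s t"
    and "connected_graph V E s t"
    and "e \<in> E" and "\<forall>f\<in>E. f \<le> e"
    and "s e \<noteq> t e"
    and "totally_cyclic E s t o1" and "reduced E s t o1"
    and "totally_cyclic E s t o2" and "reduced E s t o2"
    and "\<exists>f\<in>E. o1 f \<noteq> o2 f"
    and "\<not> cycle_flippable E s t o1 e" and "\<not> cycle_flippable E s t o2 e"
  shows "\<not> eulerian_equiv (cmerge s t e ` V) (E - {e})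
            (cmerge s t e \<circ> s) (cmerge s t e \<circ> t) o1 o2"
proof
  assume equiv: "eulerian_equiv (cmerge s t e ` V) (E - {e}) (cmerge s t e \<circ> s) (cmerge s t e \<circ> t) o1 o2"
  define D where "D = {g \<in> E - {e}. o1 g \<noteq> o2 g}"
  have "o1 e" "o2 e" using largest_edge_positive assms(3,4,6-9) by blast+
  then have "D \<noteq> {}" using assms(10) D_def by auto
  moreover have "finite D" using assms(1) D_def unfolding graph_def by auto
  ultimately have f: "Max D \<in> D" "\<forall>g\<in>D. g \<le> Max D" by simp_all
  show False
  proof (cases "o1 (Max D)")
    case False
    then show False
      by (rule reversed_largest_difference_impossible[OF assms(1,3,4,6-9,11,12) D_def f _ equiv])
  next
    case True
    then have "\<not> o2 (Max D)" using f D_def by auto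
    moreover have "D = {g \<in> E - {e}. o2 g \<noteq> o1 g}" using D_def by auto
    ultimately show False
      using reversed_largest_difference_impossible[OF assms(1,3,4,8,9,6,7,12,11) _ f]
        eulerian_equiv_sym[OF equiv] by blast
  qed
qed

end
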